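(* Let $a,b\in\mathbb{C}$ and $\theta,\tau\in S_n$ be such that $A=aP_\theta+bP_\tau$ is positive semidefinite. Then for every subgroup $G$ of $S_n$ and every character $\chi$ of $G$, $$\frac{1}{\chi(\mathrm{id})}\,d_\chi^G(A)\le\operatorname{per}(A).$$
   Context: A character $\chi$ of $G$ is $\chi(g)=\operatorname{tr}\rho(g)$ for a representation $\rho$ of $G$ on a finite-dimensional complex vector space. The generalized matrix function is $d_\chi^G(A)=\sum_{\sigma\in G}\chi(\sigma)\prod_{i=1}^n A_{i\,\sigma(i)}$. For $\theta\in S_n$, $(P_\theta)_{ij}=1$ if $\theta^{-1}(i)=j$ and $0$ otherwise. Positive semidefinite means Hermitian with nonnegative eigenvalues. $\operatorname{per}$ is the permanent. *)

theory Defs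
  imports "HOL-Analysis.Analysis" "HOL-Library.Complex_Order"
begin

text \<open>Matrices are indexed by a finite type 'n (so n = CARD('n)); S_n is the set of
permutations of UNIV :: 'n set.\<close>

definition perm_mat :: "('n::finite \<Rightarrow> 'n) \<Rightarrow> complex^'n^'n" where
  "perm_mat \<theta> = (\<chi> i j. if inv \<theta> i = j then 1 else 0)"

definition mat_scale :: "complex \<Rightarrow> complex^'n::finite^'n \<Rightarrow> complex^'n^'n" where
  "mat_scale c A = (\<chi> i j. c * A $ i $ j)"

definition perm_subgroup :: "('n::finite \<Rightarrow> 'n) set \<Rightarrow> bool" where
  "perm_subgroup G \<longleftrightarrow> (\<forall>\<sigma>\<in>G. \<sigma> permutes (UNIV :: 'n set)) \<and> id \<in> G
     \<and> (\<forall>\<sigma>\<in>G. \<forall>\<tau>\<in>G. \<sigma> \<circ> \<tau> \<in> G) \<and> (\<forall>\<sigma>\<in>G. inv \<sigma> \<in> G)"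

definition is_representation ::
  "('n::finite \<Rightarrow> 'n) set \<Rightarrow> (('n \<Rightarrow> 'n) \<Rightarrow> complex^'m::finite^'m) \<Rightarrow> bool" where
  "is_representation G \<rho> \<longleftrightarrow> \<rho> id = mat 1 \<and>
     (\<forall>\<sigma>\<in>G. \<forall>\<tau>\<in>G. \<rho> (\<sigma> \<circ> \<tau>) = \<rho> \<sigma> ** \<rho> \<tau>)"

definition gen_matrix_fun ::
  "('n::finite \<Rightarrow> 'n) set \<Rightarrow> (('n \<Rightarrow> 'n) \<Rightarrow> complex) \<Rightarrow> complex^'n^'n \<Rightarrow> complex" where
  "gen_matrix_fun G \<chi>' A = (\<Sum>\<sigma>\<in>G. \<chi>' \<sigma> * (\<Prod>i\<in>UNIV. A $ i $ \<sigma> i))"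

definition per :: "complex^'n::finite^'n \<Rightarrow> complex" where
  "per A = (\<Sum>\<sigma>\<in>{\<sigma>. \<sigma> permutes (UNIV :: 'n set)}. \<Prod>i\<in>UNIV. A $ i $ \<sigma> i)"

definition hermitian_mat :: "complex^'n::finite^'n \<Rightarrow> bool" where
  "hermitian_mat A \<longleftrightarrow> (\<forall>i j. A $ i $ j = cnj (A $ j $ i))"

definition is_eigenvalue :: "complex^'n::finite^'n \<Rightarrow> complex \<Rightarrow> bool" where
  "is_eigenvalue A c \<longleftrightarrow> (\<exists>v. v \<noteq> 0 \<and> A *v v = c *s v)"

definition psd :: "complex^'n::finite^'n \<Rightarrow> bool" where
  "psd A \<longleftrightarrow> hermitian_mat A \<and> (\<forall>c. is_eigenvalue A c \<longrightarrow> c \<in> \<real> \<and> Re c \<ge> 0)"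

end

theory Submission
  imports Defs
begin

text \<open>If A = a P_theta + b P_tau is positive semidefinite, each row of A has a nonzero diagonal
  entry or vanishes, hence at most one nonzero off-diagonal entry.  By hermitian symmetry every
  permutation sigma with a nonzero diagonal product prod_i A_{i sigma(i)} is then an involution,
  and that product is a product of diagonal entries and of factors |A_{i sigma(i)}|^2, hence
  nonnegative.  For an involution rho(sigma)^2 = I, so chi(sigma) = tr rho(sigma) is n minus twice
  the rank of the idempotent (I - rho(sigma))/2, in particular real and at most chi(id) = n.
  Summing chi(sigma) prod_i A_{i sigma(i)} <= chi(id) prod_i A_{i sigma(i)} over G and then adding
  the remaining nonnegative terms of the permanent gives the inequality.\<close>

definition sesq_form :: "complex^'n::finite^'n \<Rightarrow> complex^'n \<Rightarrow> complex^'n \<Rightarrow> complex" where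
  "sesq_form B x y = (\<Sum>i\<in>UNIV. \<Sum>j\<in>UNIV. cnj (x$i) * B$i$j * y$j)"

lemma sum_cnj_mult_self: "(\<Sum>i\<in>UNIV. cnj (x$i) * x$i) = complex_of_real (norm x ^ 2)"
proof -
  have "norm x ^ 2 = (\<Sum>i\<in>UNIV. (norm (x$i))^2)"
    unfolding norm_vec_def L2_set_def by (simp add: sum_nonneg)
  then have "complex_of_real (norm x ^ 2) = (\<Sum>i\<in>UNIV. complex_of_real ((norm (x$i))^2))"
    by (simp only: of_real_sum)
  then show ?thesis
    by (simp only: complex_norm_square mult.commute)
qed

lemma mat_mult_vec: "mat c *v x = c *s x"
  by (vector matrix_vector_mult_def mat_def) (simp add: if_distrib if_distribR cong del: if_weak_cong)

lemma sesq_form_mult_vec: "sesq_form B x y = (\<Sum>i\<in>UNIV. cnj (x$i) * (B *v y)$i)"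
  by (simp add: sesq_form_def matrix_vector_mult_def sum_distrib_left mult.assoc)

lemma sesq_form_axis: "sesq_form B (axis k 1) (axis l 1) = B $ k $ l"
proof -
  have "sesq_form B (axis k 1) (axis l 1)
      = (\<Sum>i\<in>UNIV. \<Sum>j\<in>UNIV. if i = k then (if j = l then B$i$j else 0) else 0)"
    unfolding sesq_form_def by (intro sum.cong refl) (simp add: axis_def)
  also have "\<dots> = (\<Sum>i\<in>UNIV. if i = k then B $ i $ l else 0)"
    by (intro sum.cong refl) (simp add: sum.delta)
  finally show ?thesis by (simp add: sum.delta)
qed

lemma sesq_form_hermitian_swap:
  assumes "hermitian_mat B"
  shows "sesq_form B x y = cnj (sesq_form B y x)"
proof -
  have "cnj (B$i$j) = B$j$i" for i j
    using assms unfolding hermitian_mat_def by (metis complex_cnj_cnj)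
  then have "cnj (sesq_form B y x) = (\<Sum>i\<in>UNIV. \<Sum>j\<in>UNIV. y$i * B$j$i * cnj (x$j))"
    by (simp add: sesq_form_def)
  also have "\<dots> = sesq_form B x y"
    by (subst sum.swap) (simp add: sesq_form_def mult_ac)
  finally show ?thesis by simp
qed

lemma sesq_form_scaleR: "sesq_form B (r *\<^sub>R x) (r *\<^sub>R x) = of_real (r^2) * sesq_form B x x"
  unfolding sesq_form_def vector_scaleR_component
  by (simp add: scaleR_conv_of_real sum_distrib_left power2_eq_square mult_ac)

lemma sesq_form_diff_mat: "sesq_form (A - mat c) x x = sesq_form A x x - c * of_real (norm x ^ 2)"
proof -
  have "sesq_form (A - mat c) x x = sesq_form A x x - sesq_form (mat c) x x"
    by (simp add: sesq_form_def sum_subtractf algebra_simps)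
  also have "sesq_form (mat c) x x = c * (\<Sum>i\<in>UNIV. cnj (x$i) * x$i)"
    by (simp add: sesq_form_mult_vec mat_mult_vec sum_distrib_left mult_ac)
  finally show ?thesis by (simp only: sum_cnj_mult_self)
qed

lemma sesq_form_add_smult:
  "sesq_form B (u + z *s w) (u + z *s w) =
     sesq_form B u u + z * sesq_form B u w + cnj z * sesq_form B w u + (z * cnj z) * sesq_form B w w"
proof -
  have "cnj ((u + z *s w)$i) * B$i$j * (u + z *s w)$j =
     cnj (u$i) * B$i$j * u$j + z * (cnj (u$i) * B$i$j * w$j) + cnj z * (cnj (w$i) * B$i$j * u$j)
     + (z * cnj z) * (cnj (w$i) * B$i$j * w$j)" for i j
    by (simp only: vector_add_component vector_smult_component complex_cnj_add complex_cnj_mult) algebra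
  then show ?thesis
    by (simp only: sesq_form_def sum.distrib sum_distrib_left)
qed

lemma sesq_form_attains_min_on_sphere:
  fixes A :: "complex^'n::finite^'n"
  obtains v where "norm v = 1" and "\<And>x. Re (sesq_form A v v) * (norm x)^2 \<le> Re (sesq_form A x x)"
proof -
  define Q where "Q x = Re (sesq_form A x x)" for x
  have "continuous_on (sphere 0 1) Q"
    unfolding Q_def sesq_form_def by (intro continuous_intros)
  then obtain v :: "complex^'n" where v: "norm v = 1" and min: "\<And>u. norm u = 1 \<Longrightarrow> Q v \<le> Q u"
    using continuous_attains_inf[of "sphere 0 1" Q] by auto
  have "Q v * (norm x)^2 \<le> Q x" for x
  proof (cases "x = 0")
    case True then show ?thesis by (simp add: Q_def sesq_form_def)
  next
    case False
    define u where "u = (1 / norm x) *\<^sub>R x"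
    have "x = norm x *\<^sub>R u" using False by (simp add: u_def)
    moreover have "Q (norm x *\<^sub>R u) = (norm x)^2 * Q u" by (simp add: Q_def sesq_form_scaleR)
    ultimately have "Q x = (norm x)^2 * Q u" by simp
    moreover have "Q v \<le> Q u" using False by (intro min) (simp add: u_def)
    ultimately show ?thesis by (simp add: mult.commute mult_right_mono)
  qed
  then show ?thesis using that v unfolding Q_def by blast
qed

text \<open>The form is nonnegative along v + t B v and vanishes at t = 0, so its derivative
  2 |B v|^2 at t = 0 must vanish.\<close>
lemma hermitian_form_null_vector:
  assumes herm: "hermitian_mat B" and nonneg: "\<And>x. 0 \<le> Re (sesq_form B x x)"
    and null: "Re (sesq_form B v v) = 0"
  shows "B *v v = 0"
proof -
  define w where "w = B *v v"
  define c where "c = Re (sesq_form B w v)"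
  define d where "d = Re (sesq_form B w w)"
  have "sesq_form B w v = of_real ((norm w)^2)"
    by (simp only: sesq_form_mult_vec w_def[symmetric] sum_cnj_mult_self)
  then have c_eq: "c = (norm w)^2" by (simp add: c_def)
  have d_nonneg: "0 \<le> d" using nonneg by (simp add: d_def)
  have quad: "0 \<le> 2 * t * c + t^2 * d" for t :: real
  proof -
    have "Re (sesq_form B v w) = c"
      by (simp add: c_def sesq_form_hermitian_swap[OF herm, of v w])
    then have "Re (sesq_form B (v + of_real t *s w) (v + of_real t *s w)) = 2 * t * c + t^2 * d"
      using null by (simp add: sesq_form_add_smult c_def d_def power2_eq_square)
    then show ?thesis using nonneg[of "v + of_real t *s w"] by simp
  qed
  have "c = 0"
  proof (rule ccontr)
    assume "c \<noteq> 0"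
    then have c_pos: "c > 0" using c_eq by simp
    show False
    proof (cases "d = 0")
      case True
      then show False using quad[of "-1"] c_pos by simp
    next
      case False
      then have "d > 0" using d_nonneg by simp
      then have "2 * (- c / d) * c + (- c / d)^2 * d = - (c^2 / d)"
        by (simp add: power2_eq_square field_simps)
      moreover have "c^2 / d > 0" using c_pos \<open>d > 0\<close> by simp
      ultimately show False using quad[of "- c / d"] by linarith
    qed
  qed
  then show ?thesis using c_eq by (simp add: w_def)
qed

text \<open>The minimum of the form on the unit sphere is attained at an eigenvector, so by
  hypothesis it is nonnegative.\<close>
lemma psd_sesq_form_nonneg:
  assumes "psd A"
  shows "0 \<le> Re (sesq_form A x x)"
proof -
  obtain v where v: "norm v = 1"
    and min: "\<And>x. Re (sesq_form A v v) * (norm x)^2 \<le> Re (sesq_form A x x)"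
    using sesq_form_attains_min_on_sphere by blast
  define l where "l = Re (sesq_form A v v)"
  define B where "B = A - mat (complex_of_real l)"
  have B_form: "Re (sesq_form B x x) = Re (sesq_form A x x) - l * (norm x)^2" for x
    unfolding B_def sesq_form_diff_mat by simp
  have "hermitian_mat B"
    unfolding hermitian_mat_def
  proof (intro allI)
    fix i j
    have "A$i$j = cnj (A$j$i)" using assms unfolding psd_def hermitian_mat_def by blast
    then show "B$i$j = cnj (B$j$i)" by (simp add: B_def mat_def)
  qed
  moreover have "0 \<le> Re (sesq_form B x x)" for x
    using min[of x] by (simp add: B_form l_def)
  moreover have "Re (sesq_form B v v) = 0"
    using v by (simp add: B_form l_def)
  ultimately have "B *v v = 0" by (rule hermitian_form_null_vector)
  then have "A *v v - complex_of_real l *s v = 0"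
    by (simp only: B_def matrix_vector_mult_diff_rdistrib mat_mult_vec)
  then have "A *v v = complex_of_real l *s v" by simp
  moreover have "v \<noteq> 0" using v by auto
  ultimately have "is_eigenvalue A (complex_of_real l)"
    unfolding is_eigenvalue_def by blast
  then have "0 \<le> l" using assms unfolding psd_def by (metis Re_complex_of_real)
  then have "0 \<le> l * (norm x)^2" by simp
  then show ?thesis using min[of x] unfolding l_def by linarith
qed

lemma psd_diag_nonneg:
  assumes "psd A"
  shows "0 \<le> A $ i $ i"
proof -
  have "A $ i $ i = cnj (A $ i $ i)" using assms unfolding psd_def hermitian_mat_def by blast
  then have "Im (A $ i $ i) = 0" by (metis cnj.sel(2) neg_equal_zero)
  moreover have "0 \<le> Re (A $ i $ i)"
    using psd_sesq_form_nonneg[OF assms, of "axis i 1"] by (simp add: sesq_form_axis)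
  ultimately show ?thesis by (simp add: less_eq_complex_def)
qed

text \<open>On e_j - r a e_i with a = A_ij the form takes the value A_jj - 2 r |a|^2, which is
  negative for large r unless a = 0.\<close>
lemma psd_zero_diag_row:
  assumes "psd A" and "A $ i $ i = 0"
  shows "A $ i $ j = 0"
proof (rule ccontr)
  assume nz: "A $ i $ j \<noteq> 0"
  define a where "a = A $ i $ j"
  define q where "q = (cmod a)^2"
  have q_pos: "q > 0" using nz by (simp add: q_def a_def)
  have "A $ j $ i = cnj a" using assms(1) unfolding psd_def hermitian_mat_def a_def by blast
  then have form: "sesq_form A (axis j 1 + z *s axis i 1) (axis j 1 + z *s axis i 1)
       = A $ j $ j + z * cnj a + cnj z * a" for z
    unfolding sesq_form_add_smult sesq_form_axis using assms(2) by (simp add: a_def)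
  have "a * cnj a = of_real q" "cnj a * a = of_real q"
    unfolding q_def complex_norm_square by (simp_all add: mult.commute)
  then have form_value: "Re (A $ j $ j + (- of_real r * a) * cnj a + cnj (- of_real r * a) * a)
      = Re (A $ j $ j) - 2 * r * q" for r
    by (simp add: mult.assoc)
  define r where "r = (\<bar>Re (A $ j $ j)\<bar> + 1) / (2 * q)"
  have "0 \<le> Re (A $ j $ j) - 2 * r * q"
    using psd_sesq_form_nonneg[OF assms(1), of "axis j 1 + (- of_real r * a) *s axis i 1"]
    by (simp only: form form_value)
  moreover have "2 * r * q = \<bar>Re (A $ j $ j)\<bar> + 1"
    using q_pos by (simp add: r_def)
  ultimately show False by linarith
qed

lemma matrix_diff_ldistrib: "(A::'a::ring_1^'n::finite^'m) ** (B - C) = A ** B - A ** C"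
  by (simp add: vec_eq_iff matrix_matrix_mult_def algebra_simps sum_subtractf)

lemma matrix_diff_rdistrib: "((B::'a::ring_1^'n::finite^'m) - C) ** (A::'a^'k::finite^'n) = B ** A - C ** A"
  by (simp add: vec_eq_iff matrix_matrix_mult_def algebra_simps sum_subtractf)

text \<open>F = v f^T, where v is a nonzero column of E and f the matching row of E normalised so
  that f^T v = 1.\<close>
lemma idempotent_rank_one_split:
  fixes E :: "'a::field^'m::finite^'m"
  assumes idem: "E ** E = E" and "E \<noteq> 0"
  obtains F where "trace F = 1" and "(E - F) ** (E - F) = E - F"
    and "range ((*v) (E - F)) \<subset> range ((*v) E)"
proof -
  obtain i j where Eij: "E $ i $ j \<noteq> 0"
    using \<open>E \<noteq> 0\<close> by (metis vec_eq_iff zero_index)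
  define v where "v = E *v axis j 1"
  define f where "f = (\<chi> l. E $ i $ l / v $ i)"
  define F where "F = (\<chi> k l. v $ k * f $ l)"
  have Ev: "E *v v = v" using idem by (simp add: v_def matrix_vector_mul_assoc)
  have vi: "v $ i = E $ i $ j"
    by (simp add: v_def matrix_vector_mult_def axis_def if_distrib if_distribR sum.delta' cong: if_cong)
  have fE: "(\<Sum>l\<in>UNIV. f $ l * E $ l $ k) = f $ k" for k
  proof -
    have "(\<Sum>l\<in>UNIV. E $ i $ l * E $ l $ k) = E $ i $ k"
      using arg_cong[OF idem, of "\<lambda>M. M $ i $ k"] by (simp add: matrix_matrix_mult_def)
    then show ?thesis by (simp add: f_def sum_divide_distrib[symmetric])
  qed
  have Ev_entry: "(\<Sum>l\<in>UNIV. E $ k $ l * v $ l) = v $ k" for k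
    using arg_cong[OF Ev, of "\<lambda>x. x $ k"] by (simp add: matrix_vector_mult_def)
  have fv: "(\<Sum>l\<in>UNIV. f $ l * v $ l) = 1"
    using Ev_entry[of i] Eij vi by (simp add: f_def sum_divide_distrib[symmetric])
  have EF: "E ** F = F"
    by (simp add: vec_eq_iff matrix_matrix_mult_def F_def mult.assoc[symmetric]
        sum_distrib_right[symmetric] Ev_entry)
  have FE: "F ** E = F"
    by (simp add: vec_eq_iff matrix_matrix_mult_def F_def mult.assoc sum_distrib_left[symmetric] fE)
  have FF: "F ** F = F"
  proof -
    have "(\<Sum>l\<in>UNIV. v $ k * f $ l * (v $ l * f $ m)) = v $ k * f $ m * (\<Sum>l\<in>UNIV. f $ l * v $ l)" for k m
      by (simp add: sum_distrib_left algebra_simps)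
    then show ?thesis by (simp add: vec_eq_iff matrix_matrix_mult_def F_def fv)
  qed
  have "trace F = 1" using fv by (simp add: trace_def F_def mult.commute)
  moreover have "(E - F) ** (E - F) = E - F"
    by (simp add: matrix_diff_ldistrib matrix_diff_rdistrib idem EF FE FF)
  moreover have "range ((*v) (E - F)) \<subset> range ((*v) E)"
  proof
    have "E ** (E - F) = E - F" by (simp add: matrix_diff_ldistrib idem EF)
    then show "range ((*v) (E - F)) \<subseteq> range ((*v) E)"
      by (metis image_subset_iff matrix_vector_mul_assoc rangeI)
    have "(\<Sum>l\<in>UNIV. f $ l * (E - F) $ l $ m)
        = (\<Sum>l\<in>UNIV. f $ l * E $ l $ m) - f $ m * (\<Sum>l\<in>UNIV. f $ l * v $ l)" for m
      by (simp add: F_def algebra_simps sum_subtractf sum_distrib_left)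
    then have f_annihilates: "(\<Sum>l\<in>UNIV. f $ l * (E - F) $ l $ m) = 0" for m
      using fE fv by simp
    have "(\<Sum>l\<in>UNIV. f $ l * ((E - F) *v x) $ l) = 0" for x
    proof -
      have "(\<Sum>l\<in>UNIV. f $ l * ((E - F) *v x) $ l)
          = (\<Sum>l\<in>UNIV. \<Sum>m\<in>UNIV. f $ l * (E - F) $ l $ m * x $ m)"
        by (simp add: matrix_vector_mult_def sum_distrib_left mult.assoc)
      also have "\<dots> = (\<Sum>m\<in>UNIV. (\<Sum>l\<in>UNIV. f $ l * (E - F) $ l $ m) * x $ m)"
        by (subst sum.swap) (simp add: sum_distrib_right)
      finally show ?thesis by (simp only: f_annihilates mult_zero_left sum.neutral_const)
    qed
    with fv have "v \<notin> range ((*v) (E - F))" by auto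
    moreover have "v \<in> range ((*v) E)" by (simp add: v_def)
    ultimately show "range ((*v) (E - F)) \<noteq> range ((*v) E)" by blast
  qed
  ultimately show ?thesis using that by blast
qed

lemma idempotent_trace_nat:
  fixes E :: "'a::field^'m::finite^'m"
  assumes "E ** E = E"
  shows "\<exists>k::nat. trace E = of_nat k"
  using assms
proof (induction "vec.dim (range ((*v) E))" arbitrary: E rule: less_induct)
  case less
  show ?case
  proof (cases "E = 0")
    case True
    then show ?thesis by (simp add: trace_def) (metis of_nat_0)
  next
    case False
    then obtain F where trF: "trace F = 1" and idem: "(E - F) ** (E - F) = E - F"
      and smaller: "range ((*v) (E - F)) \<subset> range ((*v) E)"
      using idempotent_rank_one_split less.prems by blast
    have "vec.dim (range ((*v) (E - F))) < vec.dim (range ((*v) E))"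
    proof (rule vec.dim_psubset)
      have span_range: "vec.span (range ((*v) X)) = range ((*v) X)" for X :: "'a^'m^'m"
        by (meson vec.span_eq_iff vec.subspace_UNIV vec.subspace_image)
      show "vec.span (range ((*v) (E - F))) \<subset> vec.span (range ((*v) E))"
        using smaller by (simp only: span_range)
    qed
    then obtain k where "trace (E - F) = of_nat k" using less.hyps idem by blast
    then have "trace E = of_nat (Suc k)" using trF by (simp add: trace_sub algebra_simps)
    then show ?thesis by blast
  qed
qed

text \<open>(I - M)/2 is idempotent, so tr M = n - 2 tr ((I - M)/2).\<close>
lemma involution_trace_le:
  fixes M :: "complex^'m::finite^'m"
  assumes "M ** M = mat 1"
  shows "trace M \<le> of_nat CARD('m)"
proof -
  define E where "E = (1/2::real) *\<^sub>R (mat 1 - M)"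
  have "(mat 1 - M) ** (mat 1 - M) = (2::real) *\<^sub>R (mat 1 - M)"
    using assms by (simp add: matrix_diff_ldistrib matrix_diff_rdistrib scaleR_2 algebra_simps)
  then have "E ** E = E"
    by (simp add: E_def matrix_scalar_ac flip: scalar_matrix_assoc)
  then obtain k where "trace E = of_nat k" using idempotent_trace_nat by blast
  moreover have "trace E = (1/2::real) *\<^sub>R trace (mat 1 - M)"
    by (simp add: E_def trace_def scaleR_sum_right)
  moreover have "trace (mat 1 - M) = of_nat CARD('m) - trace M"
    by (simp add: trace_sub trace_I)
  ultimately have "trace M = of_nat CARD('m) - 2 * of_nat k"
    by (auto simp: scaleR_conv_of_real field_simps)
  then show ?thesis by (simp add: less_eq_complex_def)
qed

lemma prod_involution_nonneg:
  fixes A :: "complex^'n::finite^'n"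
  assumes herm: "hermitian_mat A" and diag: "\<And>i. 0 \<le> A $ i $ i"
    and invol: "\<And>i. \<sigma> (\<sigma> i) = i"
    and "finite S" and closed: "\<And>i. i \<in> S \<Longrightarrow> \<sigma> i \<in> S"
  shows "0 \<le> (\<Prod>i\<in>S. A $ i $ \<sigma> i)"
  using \<open>finite S\<close> closed
proof (induction "card S" arbitrary: S rule: less_induct)
  case less
  show ?case
  proof (cases "S = {}")
    case True
    then show ?thesis by (simp add: less_eq_complex_def)
  next
    case False
    then obtain i where i: "i \<in> S" by blast
    let ?S' = "S - {i, \<sigma> i}"
    have "card ?S' < card S"
      using i less.prems(1) by (intro psubset_card_mono) auto
    moreover have "\<sigma> k \<in> ?S'" if "k \<in> ?S'" for k
    proof -
      have k: "k \<in> S" "k \<noteq> i" "k \<noteq> \<sigma> i" using that by auto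
      have "\<sigma> k \<noteq> i" "\<sigma> k \<noteq> \<sigma> i" using k(2,3) invol by metis+
      then show ?thesis using less.prems(2)[OF k(1)] by blast
    qed
    ultimately have rest: "0 \<le> (\<Prod>k\<in>?S'. A $ k $ \<sigma> k)"
      using less.prems(1) by (intro less.hyps) auto
    show ?thesis
    proof (cases "\<sigma> i = i")
      case True
      then have "(\<Prod>k\<in>S. A $ k $ \<sigma> k) = A $ i $ i * (\<Prod>k\<in>?S'. A $ k $ \<sigma> k)"
        using i less.prems(1) by (simp add: prod.remove)
      then show ?thesis using diag[of i] rest by simp
    next
      case False
      have "\<sigma> i \<in> S - {i}" using i less.prems(2) False by blast
      then have "(\<Prod>k\<in>S - {i}. A $ k $ \<sigma> k) = A $ \<sigma> i $ i * (\<Prod>k\<in>?S'. A $ k $ \<sigma> k)"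
        using less.prems(1) invol by (simp add: prod.remove Diff_insert2[symmetric])
      then have "(\<Prod>k\<in>S. A $ k $ \<sigma> k) = A $ i $ \<sigma> i * (A $ \<sigma> i $ i * (\<Prod>k\<in>?S'. A $ k $ \<sigma> k))"
        using i less.prems(1) by (simp add: prod.remove)
      also have "A $ \<sigma> i $ i = cnj (A $ i $ \<sigma> i)"
        using herm unfolding hermitian_mat_def by blast
      also have "A $ i $ \<sigma> i * (cnj (A $ i $ \<sigma> i) * (\<Prod>k\<in>?S'. A $ k $ \<sigma> k))
          = of_real ((cmod (A $ i $ \<sigma> i))^2) * (\<Prod>k\<in>?S'. A $ k $ \<sigma> k)"
        by (simp only: complex_norm_square mult.assoc)
      finally show ?thesis
        using rest by (simp add: less_eq_complex_def)
    qed
  qed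
qed

text \<open>Every row with a nonzero entry has a nonzero diagonal entry, so at most one nonzero
  off-diagonal entry; by hermitian symmetry a permutation using only nonzero entries must swap
  the two indices of each such entry.\<close>
lemma psd_perm_term_involutive:
  fixes A :: "complex^'n::finite^'n"
  assumes psd: "psd A" and supp: "\<And>i j. A $ i $ j \<noteq> 0 \<Longrightarrow> j = \<alpha> i \<or> j = \<beta> i"
    and perm: "\<sigma> permutes UNIV" and nonzero: "(\<Prod>i\<in>UNIV. A $ i $ \<sigma> i) \<noteq> 0"
  shows "\<sigma> \<circ> \<sigma> = id"
proof -
  have entry: "A $ k $ \<sigma> k \<noteq> 0" for k
    using nonzero by (simp add: prod_zero_iff)
  have diag: "\<alpha> k = k \<or> \<beta> k = k" for k
    using entry[of k] psd_zero_diag_row[OF psd] supp[of k k] by metis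
  have "\<sigma> (\<sigma> i) = i" for i
  proof (cases "\<sigma> i = i")
    case False
    define j where "j = \<sigma> i"
    have "A $ j $ i = cnj (A $ i $ j)"
      using psd unfolding psd_def hermitian_mat_def by blast
    then have "i = \<alpha> j \<or> i = \<beta> j"
      using supp entry[of i] by (simp add: j_def)
    moreover have "\<sigma> j = \<alpha> j \<or> \<sigma> j = \<beta> j" using supp entry[of j] by blast
    moreover have "\<sigma> j \<noteq> j" "i \<noteq> j"
      using False perm by (simp_all add: j_def permutes_inj injD) (metis permutes_inj injD)
    ultimately have "\<sigma> j = i" using diag[of j] by auto
    then show ?thesis by (simp add: j_def)
  qed simp
  then show ?thesis by (simp add: fun_eq_iff)
qed

lemma psd_perm_term_nonneg:
  fixes A :: "complex^'n::finite^'n"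
  assumes psd: "psd A" and supp: "\<And>i j. A $ i $ j \<noteq> 0 \<Longrightarrow> j = \<alpha> i \<or> j = \<beta> i"
    and perm: "\<sigma> permutes UNIV"
  shows "0 \<le> (\<Prod>i\<in>UNIV. A $ i $ \<sigma> i)"
proof (cases "(\<Prod>i\<in>UNIV. A $ i $ \<sigma> i) = 0")
  case False
  with psd supp perm have "\<sigma> \<circ> \<sigma> = id" by (rule psd_perm_term_involutive)
  then show ?thesis
    using psd psd_diag_nonneg[OF psd]
    by (intro prod_involution_nonneg) (auto simp: psd_def fun_eq_iff pointfree_idE)
qed (metis order_refl)

lemma character_id:
  fixes \<rho> :: "('n::finite \<Rightarrow> 'n) \<Rightarrow> complex^'m::finite^'m"
  assumes "perm_subgroup G" and "is_representation G \<rho>" and "\<forall>g\<in>G. \<chi>' g = trace (\<rho> g)"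
  shows "\<chi>' id = of_nat CARD('m)"
  using assms by (simp add: perm_subgroup_def is_representation_def trace_I)

text \<open>On the nonzero terms rho(sigma)^2 = I, so chi(sigma) <= chi(id) term by term.\<close>
lemma gen_matrix_fun_le_per:
  fixes A :: "complex^'n::finite^'n" and \<rho> :: "('n \<Rightarrow> 'n) \<Rightarrow> complex^'m::finite^'m"
  assumes G: "perm_subgroup G" and \<rho>: "is_representation G \<rho>"
    and \<chi>: "\<forall>g\<in>G. \<chi>' g = trace (\<rho> g)"
    and nonneg: "\<And>\<sigma>. \<sigma> permutes UNIV \<Longrightarrow> 0 \<le> (\<Prod>i\<in>UNIV. A $ i $ \<sigma> i)"
    and involutive: "\<And>\<sigma>. \<sigma> permutes UNIV \<Longrightarrow> (\<Prod>i\<in>UNIV. A $ i $ \<sigma> i) \<noteq> 0 \<Longrightarrow> \<sigma> \<circ> \<sigma> = id"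
  shows "gen_matrix_fun G \<chi>' A \<le> \<chi>' id * per A"
proof -
  define W where "W \<sigma> = (\<Prod>i\<in>UNIV. A $ i $ \<sigma> i)" for \<sigma> :: "'n \<Rightarrow> 'n"
  have perms: "G \<subseteq> {\<sigma>. \<sigma> permutes (UNIV :: 'n set)}"
    using G by (auto simp: perm_subgroup_def)
  have \<chi>_id: "\<chi>' id = of_nat CARD('m)" using character_id[OF G \<rho> \<chi>] .
  have term_le: "\<chi>' \<sigma> * W \<sigma> \<le> \<chi>' id * W \<sigma>" if "\<sigma> \<in> G" for \<sigma>
  proof (cases "W \<sigma> = 0")
    case False
    then have "\<sigma> \<circ> \<sigma> = id" using involutive perms that by (auto simp: W_def)
    then have "\<rho> \<sigma> ** \<rho> \<sigma> = mat 1"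
      using \<rho> that by (metis is_representation_def)
    then have "\<chi>' \<sigma> \<le> \<chi>' id"
      using involution_trace_le \<chi> that \<chi>_id by simp
    then show ?thesis
      using nonneg perms that by (intro mult_right_mono) (auto simp: W_def)
  qed simp
  have "gen_matrix_fun G \<chi>' A = (\<Sum>\<sigma>\<in>G. \<chi>' \<sigma> * W \<sigma>)"
    by (simp add: gen_matrix_fun_def W_def)
  also have "\<dots> \<le> (\<Sum>\<sigma>\<in>G. \<chi>' id * W \<sigma>)"
    by (rule sum_mono) (rule term_le)
  also have "\<dots> = \<chi>' id * (\<Sum>\<sigma>\<in>G. W \<sigma>)"
    by (simp add: sum_distrib_left)
  also have "\<dots> \<le> \<chi>' id * (\<Sum>\<sigma>\<in>{\<sigma>. \<sigma> permutes (UNIV :: 'n set)}. W \<sigma>)"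
    using perms nonneg
    by (intro mult_left_mono sum_mono2) (auto simp: W_def finite_permutations \<chi>_id less_eq_complex_def)
  also have "\<dots> = \<chi>' id * per A"
    by (simp add: per_def W_def)
  finally show ?thesis .
qed

theorem theorem3p7:
  fixes a b :: complex and \<theta> \<tau> :: "'n::finite \<Rightarrow> 'n"
    and G :: "('n \<Rightarrow> 'n) set" and \<rho> :: "('n \<Rightarrow> 'n) \<Rightarrow> complex^'m::finite^'m"
    and \<chi>' :: "('n \<Rightarrow> 'n) \<Rightarrow> complex"
  assumes "\<theta> permutes (UNIV :: 'n set)" and "\<tau> permutes (UNIV :: 'n set)"
    and "psd (mat_scale a (perm_mat \<theta>) + mat_scale b (perm_mat \<tau>))"
    and "perm_subgroup G"
    and "is_representation G \<rho>"
    and "\<forall>g\<in>G. \<chi>' g = trace (\<rho> g)"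
  shows "gen_matrix_fun G \<chi>' (mat_scale a (perm_mat \<theta>) + mat_scale b (perm_mat \<tau>)) / \<chi>' id
           \<le> per (mat_scale a (perm_mat \<theta>) + mat_scale b (perm_mat \<tau>))"
proof -
  define A where "A = mat_scale a (perm_mat \<theta>) + mat_scale b (perm_mat \<tau>)"
  have supp: "A $ i $ j \<noteq> 0 \<Longrightarrow> j = inv \<theta> i \<or> j = inv \<tau> i" for i j
    by (auto simp: A_def mat_scale_def perm_mat_def split: if_splits)
  have "gen_matrix_fun G \<chi>' A \<le> \<chi>' id * per A"
    using assms(3) supp unfolding A_def[symmetric]
    by (intro gen_matrix_fun_le_per[OF assms(4-6)] psd_perm_term_nonneg psd_perm_term_involutive)
  moreover have "\<chi>' id = of_nat CARD('m)" using character_id[OF assms(4-6)] .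
  ultimately show ?thesis
    by (simp add: A_def less_eq_complex_def pos_divide_le_eq mult.commute)
qed

end
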